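(* Let $A$ and $B$ be nonempty closed subsets of a complete metric space $(X,\rho)$ such that both ordered pairs $(A,B)$ and $(B,A)$ have the $BUC$ property. Let $F:A\times A\to B$ and $G:B\times B\to A$ be such that there exist $\alpha,\beta\in(0,1)$ with $\alpha+\beta<1$ and $$\rho(F(x,y),G(u,v))\le\alpha\rho(x,u)+\beta\rho(y,v)+(1-(\alpha+\beta))\,\mathrm{dist}(A,B)$$ for all $(x,y)\in A\times A$ and $(u,v)\in B\times B$. Then there exist a coupled best proximity point $(x,y)$ of $F$ in $A\times A$ and a coupled best proximity point $(u,v)$ of $G$ in $B\times B$ such that $\rho(x,u)+\rho(y,v)=2\,\mathrm{dist}(A,B)$.
   Context: $\mathrm{dist}(A,B)=\inf\{\rho(a,b):a\in A,\ b\in B\}$. A point $(x,y)\in A\times A$ is a coupled best proximity point of $F:A\times A\to B$ if $\rho(x,F(x,y))=\rho(y,F(y,x))=\mathrm{dist}(A,B)$; similarly $(u,v)\in B\times B$ is a coupled best proximity point of $G:B\times B\to A$ if $\rho(u,G(u,v))=\rho(v,G(v,u))=\mathrm{dist}(A,B)$. The ordered pair $(A,B)$ has the bounded $UC$ property ($BUC$) if for all bounded sequences $\{x_n\},\{z_n\}\subset A$ and every sequence $\{y_n\}\subset B$ with $\lim_n\rho(x_n,y_n)=\lim_n\rho(z_n,y_n)=\mathrm{dist}(A,B)$ one has $\lim_n\rho(x_n,z_n)=0$; the property for $(B,A)$ is defined with the roles of $A$ and $B$ interchanged. *)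

theory Defs
  imports "HOL-Analysis.Analysis"
begin

definition BUC :: "'a::metric_space set \<Rightarrow> 'a set \<Rightarrow> bool" where
  "BUC A B \<longleftrightarrow>
    (\<forall>x z y :: nat \<Rightarrow> 'a.
       (\<forall>n. x n \<in> A) \<and> (\<forall>n. z n \<in> A) \<and> (\<forall>n. y n \<in> B) \<and>
       bounded (range x) \<and> bounded (range z) \<and>
       ((\<lambda>n. dist (x n) (y n)) \<longlonglongrightarrow> setdist A B) \<and>
       ((\<lambda>n. dist (z n) (y n)) \<longlonglongrightarrow> setdist A B)
       \<longrightarrow> ((\<lambda>n. dist (x n) (z n)) \<longlonglongrightarrow> 0))"

definition coupled_best_prox :: "'a::metric_space set \<Rightarrow> 'a set \<Rightarrow> ('a \<Rightarrow> 'a \<Rightarrow> 'a) \<Rightarrow> 'a \<Rightarrow> 'a \<Rightarrow> bool" where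
  "coupled_best_prox A B F x y \<longleftrightarrow>
     x \<in> A \<and> y \<in> A \<and> dist x (F x y) = setdist A B \<and> dist y (F y x) = setdist A B"

end

theory Submission
  imports Defs
begin

text \<open>On the diagonal the coupled maps become \<open>f z = F z z\<close> and \<open>g w = G w w\<close>, and the hypothesis
  turns into a cyclic contraction \<open>dist (f x) (g w) - d \<le> k (dist x w - d)\<close> with \<open>k = \<alpha> + \<beta>\<close> and
  \<open>d = dist(A,B)\<close>. Along the orbit \<open>z\<^sub>n = (g \<circ> f)\<^sup>n a\<close> the excess \<open>dist z\<^sub>n (f z\<^sub>n) - d\<close> then decays
  like \<open>k\<^sup>2\<^sup>n\<close>, and since both \<open>z\<^sub>n\<close> and \<open>z\<^sub>m\<close> are almost nearest to the single point \<open>f z\<^sub>n\<close> of \<open>B\<close>,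
  the BUC property forces the orbit to be Cauchy. Its limit \<open>x\<close> satisfies \<open>dist x (f x) = d\<close>, and
  one more contraction step gives \<open>dist (f x) (g (f x)) = d\<close>; so \<open>(x, x)\<close> and \<open>(f x, f x)\<close> are the
  required coupled best proximity points.\<close>

lemma BUC_uniform:
  fixes A B :: "'a::metric_space set"
  assumes buc: "BUC A B" and e: "e > 0"
  shows "\<exists>\<delta>>0. \<forall>x z y. x \<in> A \<and> z \<in> A \<and> y \<in> B \<and> x \<in> cball c R \<and> z \<in> cball c R \<and>
           dist x y < setdist A B + \<delta> \<and> dist z y < setdist A B + \<delta> \<longrightarrow> dist x z < e"
proof (rule ccontr)
  define d where "d = setdist A B"
  assume "\<not> ?thesis"
  then have "\<forall>n. \<exists>x z y. x \<in> A \<and> z \<in> A \<and> y \<in> B \<and> x \<in> cball c R \<and> z \<in> cball c R \<and>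
      dist x y < d + inverse (real (Suc n)) \<and> dist z y < d + inverse (real (Suc n)) \<and> e \<le> dist x z"
    unfolding d_def by (metis inverse_positive_iff_positive of_nat_0_less_iff zero_less_Suc not_less)
  then obtain X Z Y where XZY: "\<And>n. X n \<in> A \<and> Z n \<in> A \<and> Y n \<in> B \<and> X n \<in> cball c R \<and> Z n \<in> cball c R \<and>
      dist (X n) (Y n) < d + inverse (real (Suc n)) \<and> dist (Z n) (Y n) < d + inverse (real (Suc n)) \<and>
      e \<le> dist (X n) (Z n)"
    by metis
  have upper: "(\<lambda>n. d + inverse (real (Suc n))) \<longlonglongrightarrow> d"
    using tendsto_add[OF tendsto_const LIMSEQ_inverse_real_of_nat, of d] by simp
  have near: "(\<lambda>n. dist (P n) (Y n)) \<longlonglongrightarrow> d"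
    if "\<And>n. P n \<in> A \<and> dist (P n) (Y n) < d + inverse (real (Suc n))" for P
  proof (rule tendsto_sandwich[OF _ _ tendsto_const upper])
    show "\<forall>\<^sub>F n in sequentially. d \<le> dist (P n) (Y n)"
      using that XZY setdist_le_dist unfolding d_def by (intro always_eventually) blast
    show "\<forall>\<^sub>F n in sequentially. dist (P n) (Y n) \<le> d + inverse (real (Suc n))"
      using that by (intro always_eventually allI less_imp_le) blast
  qed
  have "bounded (range X)" "bounded (range Z)"
    using XZY by (auto intro: bounded_subset[OF bounded_cball[of c R]])
  with buc near[of X] near[of Z] XZY have "(\<lambda>n. dist (X n) (Z n)) \<longlonglongrightarrow> 0"
    unfolding BUC_def d_def by blast
  then have "e \<le> 0"
    by (rule LIMSEQ_le_const) (use XZY in auto)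
  with e show False by simp
qed

locale cyclic_contraction =
  fixes A B :: "'a::metric_space set" and f g :: "'a \<Rightarrow> 'a" and k :: real
  assumes f_into: "x \<in> A \<Longrightarrow> f x \<in> B"
    and g_into: "w \<in> B \<Longrightarrow> g w \<in> A"
    and k_nonneg: "0 \<le> k" and k_less_1: "k < 1"
    and contraction: "x \<in> A \<Longrightarrow> w \<in> B \<Longrightarrow>
           dist (f x) (g w) - setdist A B \<le> k * (dist x w - setdist A B)"
begin

definition orbit :: "'a \<Rightarrow> nat \<Rightarrow> 'a"
  where "orbit a n = ((g \<circ> f) ^^ n) a"

lemma orbit_0 [simp]: "orbit a 0 = a"
  and orbit_Suc [simp]: "orbit a (Suc n) = g (f (orbit a n))"
  by (simp_all add: orbit_def)

lemma orbit_in_A: "a \<in> A \<Longrightarrow> orbit a n \<in> A"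
  by (induction n) (simp_all add: f_into g_into)

lemma excess_two_steps:
  assumes "x \<in> A" "y \<in> A"
  shows "dist (g (f x)) (f (g (f y))) - setdist A B \<le> k\<^sup>2 * (dist x (f y) - setdist A B)"
proof -
  have "dist (g (f x)) (f (g (f y))) - setdist A B \<le> k * (dist (g (f y)) (f x) - setdist A B)"
    using contraction[of "g (f y)" "f x"] assms by (simp add: f_into g_into dist_commute)
  also have "\<dots> \<le> k * (k * (dist x (f y) - setdist A B))"
    using contraction[of x "f y"] assms k_nonneg
    by (intro mult_left_mono) (simp_all add: f_into dist_commute)
  finally show ?thesis by (simp add: power2_eq_square)
qed

lemma orbit_excess_decay:
  assumes "a \<in> A"
  shows "dist (orbit a (n + m)) (f (orbit a n)) - setdist A B
           \<le> k ^ (2 * n) * (dist (orbit a m) (f a) - setdist A B)"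
proof (induction n)
  case (Suc n)
  have "dist (orbit a (Suc n + m)) (f (orbit a (Suc n))) - setdist A B
          \<le> k\<^sup>2 * (dist (orbit a (n + m)) (f (orbit a n)) - setdist A B)"
    using excess_two_steps orbit_in_A assms by simp
  also have "\<dots> \<le> k\<^sup>2 * (k ^ (2 * n) * (dist (orbit a m) (f a) - setdist A B))"
    by (rule mult_left_mono[OF Suc.IH]) simp
  also have "\<dots> = k ^ (2 * Suc n) * (dist (orbit a m) (f a) - setdist A B)"
    by (simp add: power_mult power2_eq_square)
  finally show ?case .
qed simp

text \<open>The orbit stays within a fixed distance of \<open>f a\<close>: going from \<open>orbit a m\<close> to \<open>f a\<close> via
  \<open>f (orbit a m)\<close> and \<open>orbit a 1 = g (f a)\<close> costs at most a constant plus \<open>k\<close> times the distance itself.\<close>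
lemma orbit_bounded:
  assumes a: "a \<in> A"
  obtains M where "\<And>m. dist (orbit a m) (f a) - setdist A B \<le> M"
proof
  let ?d = "setdist A B" and ?E = "\<lambda>m. dist (orbit a m) (f a) - setdist A B"
  define M where "M = (?E 0 + ?d + dist (orbit a 1) (f a)) / (1 - k)"
  have E_nonneg: "0 \<le> ?E m" for m
    using setdist_le_dist[OF orbit_in_A f_into] a by simp
  show "?E m \<le> M" for m
  proof -
    have "dist (orbit a (m + 0)) (f (orbit a m)) - ?d \<le> k ^ (2 * m) * ?E 0"
      by (rule orbit_excess_decay[OF a])
    also have "\<dots> \<le> 1 * ?E 0"
      by (rule mult_right_mono[OF power_le_one[OF k_nonneg] E_nonneg]) (use k_less_1 in simp)
    finally have to_image: "dist (orbit a m) (f (orbit a m)) \<le> ?d + ?E 0" by simp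
    have via_orbit_1: "dist (f (orbit a m)) (orbit a 1) \<le> ?d + k * ?E m"
      using contraction[OF orbit_in_A[OF a] f_into[OF a], of m] by simp
    have "(1 - k) * ?E m \<le> ?E 0 + ?d + dist (orbit a 1) (f a)"
      using to_image via_orbit_1 dist_triangle[of "orbit a m" "f a" "f (orbit a m)"]
        dist_triangle[of "f (orbit a m)" "f a" "orbit a 1"]
      by (simp add: algebra_simps)
    then show ?thesis
      using k_less_1 by (simp add: M_def pos_le_divide_eq mult.commute)
  qed
qed

lemma orbit_excess_le:
  assumes "a \<in> A" and "\<And>m. dist (orbit a m) (f a) - setdist A B \<le> M"
  shows "dist (orbit a (n + m)) (f (orbit a n)) - setdist A B \<le> k ^ (2 * n) * M"
  using order_trans[OF orbit_excess_decay[OF assms(1)] mult_left_mono[OF assms(2)]] k_nonneg by simp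

lemma geometric_even_powers_tendsto_0: "(\<lambda>n. k ^ (2 * n) * M) \<longlonglongrightarrow> 0"
proof -
  have "(\<lambda>n. (k\<^sup>2) ^ n * M) \<longlonglongrightarrow> 0 * M"
    using k_nonneg k_less_1
    by (intro tendsto_mult LIMSEQ_power_zero tendsto_const) (simp add: power_less_one_iff)
  then show ?thesis by (simp add: power_mult)
qed

lemma Cauchy_orbit:
  assumes "BUC A B" and a: "a \<in> A"
  shows "Cauchy (orbit a)"
proof (rule CauchyI')
  fix e :: real assume "0 < e"
  obtain M where M: "\<And>m. dist (orbit a m) (f a) - setdist A B \<le> M"
    using orbit_bounded[OF a] by blast
  note decay = orbit_excess_le[OF a M]
  have ball: "orbit a m \<in> cball (f a) (setdist A B + M)" for m
    using M[of m] by (simp add: dist_commute)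
  obtain \<delta> where "\<delta> > 0" and close: "\<And>x z y. x \<in> A \<Longrightarrow> z \<in> A \<Longrightarrow> y \<in> B \<Longrightarrow>
      x \<in> cball (f a) (setdist A B + M) \<Longrightarrow> z \<in> cball (f a) (setdist A B + M) \<Longrightarrow>
      dist x y < setdist A B + \<delta> \<Longrightarrow> dist z y < setdist A B + \<delta> \<Longrightarrow> dist x z < e"
    using BUC_uniform[OF assms(1) \<open>0 < e\<close>, of "f a" "setdist A B + M"] by blast
  obtain N where N: "\<And>n. n \<ge> N \<Longrightarrow> k ^ (2 * n) * M < \<delta>"
    using order_tendstoD(2)[OF geometric_even_powers_tendsto_0 \<open>\<delta> > 0\<close>]
    by (auto simp: eventually_sequentially)
  have near: "dist (orbit a m) (orbit a (m + j)) < e" if "m \<ge> N" for m j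
  proof (rule close[OF orbit_in_A[OF a] orbit_in_A[OF a] f_into[OF orbit_in_A[OF a]] ball ball])
    show "dist (orbit a m) (f (orbit a m)) < setdist A B + \<delta>"
      using decay[of m 0] N[OF that] by simp
    show "dist (orbit a (m + j)) (f (orbit a m)) < setdist A B + \<delta>"
      using decay[of m j] N[OF that] by simp
  qed
  show "\<exists>N. \<forall>m\<ge>N. \<forall>n>m. dist (orbit a m) (orbit a n) < e"
  proof (intro exI allI impI)
    fix m n assume "N \<le> m" "m < n"
    then show "dist (orbit a m) (orbit a n) < e"
      using near[of m "n - m"] by simp
  qed
qed

lemma best_proximity_at_orbit_limit:
  assumes a: "a \<in> A" and x: "x \<in> A" and lim: "orbit a \<longlonglongrightarrow> x"
  shows "dist x (f x) = setdist A B"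
proof (rule antisym)
  obtain M where M: "\<And>m. dist (orbit a m) (f a) - setdist A B \<le> M"
    using orbit_bounded[OF a] by blast
  note decay = orbit_excess_le[OF a M]
  define R where "R n = dist x (orbit a (Suc n)) + setdist A B
                          + k * (dist x (orbit a n) + k ^ (2 * n) * M)" for n
  have dist_lim: "(\<lambda>n. dist x (orbit a n)) \<longlonglongrightarrow> 0"
    using tendsto_dist[OF tendsto_const lim, of x] by simp
  have "R \<longlonglongrightarrow> 0 + setdist A B + k * (0 + 0)"
    unfolding R_def
    by (intro tendsto_intros geometric_even_powers_tendsto_0 dist_lim LIMSEQ_Suc[OF dist_lim])
  then have R_lim: "R \<longlonglongrightarrow> setdist A B" by simp
  have "dist x (f x) \<le> R n" for n
  proof -
    have "dist (f x) (orbit a (Suc n)) - setdist A B \<le> k * (dist x (f (orbit a n)) - setdist A B)"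
      using contraction[OF x f_into[OF orbit_in_A[OF a]]] by simp
    also have "\<dots> \<le> k * (dist x (orbit a n) + k ^ (2 * n) * M)"
      using decay[of n 0] dist_triangle[of x "f (orbit a n)" "orbit a n"] k_nonneg
      by (intro mult_left_mono) auto
    finally show ?thesis
      using dist_triangle[of x "f x" "orbit a (Suc n)"] by (simp add: R_def dist_commute)
  qed
  then show "dist x (f x) \<le> setdist A B"
    by (intro LIMSEQ_le_const[OF R_lim]) auto
  show "setdist A B \<le> dist x (f x)"
    using setdist_le_dist[OF x f_into[OF x]] .
qed

lemma best_proximity_image:
  assumes x: "x \<in> A" and "dist x (f x) = setdist A B"
  shows "dist (f x) (g (f x)) = setdist A B"
  using contraction[OF x f_into[OF x]] assms setdist_le_dist[OF g_into[OF f_into[OF x]] f_into[OF x]]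
  by (simp add: dist_commute)

end

lemma cyclic_contraction_best_proximity_pair:
  fixes A B :: "'a::complete_space set"
  assumes "cyclic_contraction A B f g k" "closed A" "A \<noteq> {}" "BUC A B"
  obtains x where "x \<in> A" "dist x (f x) = setdist A B" "dist (f x) (g (f x)) = setdist A B"
proof -
  interpret cyclic_contraction A B f g k by fact
  obtain a where a: "a \<in> A" using assms(3) by blast
  obtain x where lim: "orbit a \<longlonglongrightarrow> x"
    using Cauchy_orbit[OF assms(4) a] Cauchy_convergent_iff convergent_def by blast
  have x: "x \<in> A" using closed_sequentially[OF assms(2) _ lim] orbit_in_A[OF a] by blast
  then show thesis
    using that best_proximity_at_orbit_limit[OF a x lim] best_proximity_image by blast
qed

theorem theorem35:
  fixes A B :: "'a::complete_space set"
    and F G :: "'a \<Rightarrow> 'a \<Rightarrow> 'a"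
    and \<alpha> \<beta> :: real
  assumes "A \<noteq> {}" "B \<noteq> {}" "closed A" "closed B"
    and "BUC A B" "BUC B A"
    and "\<And>x y. x \<in> A \<Longrightarrow> y \<in> A \<Longrightarrow> F x y \<in> B"
    and "\<And>u v. u \<in> B \<Longrightarrow> v \<in> B \<Longrightarrow> G u v \<in> A"
    and "0 < \<alpha>" "\<alpha> < 1" "0 < \<beta>" "\<beta> < 1" "\<alpha> + \<beta> < 1"
    and "\<And>x y u v. x \<in> A \<Longrightarrow> y \<in> A \<Longrightarrow> u \<in> B \<Longrightarrow> v \<in> B \<Longrightarrow>
           dist (F x y) (G u v) \<le> \<alpha> * dist x u + \<beta> * dist y v + (1 - (\<alpha> + \<beta>)) * setdist A B"
  shows "\<exists>x y u v. coupled_best_prox A B F x y \<and> coupled_best_prox B A G u v \<and>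
           dist x u + dist y v = 2 * setdist A B"
proof -
  have "cyclic_contraction A B (\<lambda>z. F z z) (\<lambda>w. G w w) (\<alpha> + \<beta>)"
  proof
    fix x w assume "x \<in> A" "w \<in> B"
    then show "dist (F x x) (G w w) - setdist A B \<le> (\<alpha> + \<beta>) * (dist x w - setdist A B)"
      using assms(14)[of x x w w] by (simp add: algebra_simps)
  qed (use assms(7-9,11,13) in auto)
  then obtain x where x: "x \<in> A" "dist x (F x x) = setdist A B"
    and Fx: "dist (F x x) (G (F x x) (F x x)) = setdist A B"
    using cyclic_contraction_best_proximity_pair assms(1,3,5) by blast
  have "coupled_best_prox A B F x x" "coupled_best_prox B A G (F x x) (F x x)"
    using x Fx assms(7) by (simp_all add: coupled_best_prox_def setdist_sym)
  with x(2) show ?thesis by (metis mult_2)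
qed

end
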